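(* Let $q$ be a prime power and let $\mathcal{F}=(\mathcal{F}_1,\ldots,\mathcal{F}_r)$ be a flag of type $(t_1,\ldots,t_r)$ on $\mathbb{F}_{q^n}$. Assume $m$ is a divisor of $n$ with $m=t_i$ for some $i\in\{1,\ldots,r\}$, and let $\beta\in\mathbb{F}_{q^n}^*$ be such that $\mathbb{F}_{q^m}^*\subseteq\langle\beta\rangle$. Then: (1) $\frac{|\beta|}{q^m-1}$ divides $|\mathrm{Orb}_\beta(\mathcal{F})|$; (2) $|\mathrm{Orb}_\beta(\mathcal{F})|=\frac{|\beta|}{q^m-1}$ if and only if every subspace $\mathcal{F}_j$ ($1\le j\le r$) is a vector space over $\mathbb{F}_{q^m}$; in particular, if this equality holds, then $t_1=m$.
   Context: $\mathbb{F}_{q^n}$ is regarded as an $\mathbb{F}_q$-vector space. A flag of type $(t_1,\ldots,t_r)$ on $\mathbb{F}_{q^n}$ is a sequence $(\mathcal{F}_1,\ldots,\mathcal{F}_r)$ of $\mathbb{F}_q$-subspaces with $\{0\}\subsetneq\mathcal{F}_1\subsetneq\cdots\subsetneq\mathcal{F}_r\subsetneq\mathbb{F}_{q^n}$ and $\dim_{\mathbb{F}_q}\mathcal{F}_i=t_i$. For $\beta\in\mathbb{F}_{q^n}^*$, $|\beta|$ is its multiplicative order, $\mathcal{F}\beta=(\mathcal{F}_1\beta,\ldots,\mathcal{F}_r\beta)$ where $\mathcal{U}\beta=\{u\beta:u\in\mathcal{U}\}$, and $\mathrm{Orb}_\beta(\mathcal{F})=\{\mathcal{F}\beta^j:0\le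 j\le|\beta|-1\}$. *)

theory Defs
  imports "HOL-Algebra.Algebra" "HOL-Computational_Algebra.Primes"
begin

definition is_flag :: "('a, 'b) ring_scheme \<Rightarrow> 'a set \<Rightarrow> 'a set list \<Rightarrow> nat list \<Rightarrow> bool" where
  "is_flag R K F ts \<longleftrightarrow>
     length F = length ts \<and>
     (\<forall>i < length F. subalgebra K (F ! i) R \<and> ring.dimension R (ts ! i) K (F ! i)) \<and>
     (F \<noteq> [] \<longrightarrow> {\<zero>\<^bsub>R\<^esub>} \<subset> hd F \<and> last F \<subset> carrier R) \<and>
     (\<forall>i. Suc i < length F \<longrightarrow> F ! i \<subset> F ! Suc i)"

definition elem_ord :: "('a, 'b) ring_scheme \<Rightarrow> 'a \<Rightarrow> nat" where
  "elem_ord R b = group.ord (units_of R) b"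

definition flag_mult :: "('a, 'b) ring_scheme \<Rightarrow> 'a set list \<Rightarrow> 'a \<Rightarrow> 'a set list" where
  "flag_mult R F b = map (\<lambda>U. (\<lambda>u. u \<otimes>\<^bsub>R\<^esub> b) ` U) F"

definition flag_orbit :: "('a, 'b) ring_scheme \<Rightarrow> 'a \<Rightarrow> 'a set list \<Rightarrow> 'a set list set" where
  "flag_orbit R b F = {flag_mult R F (b [^]\<^bsub>R\<^esub> j) | j::nat. j < elem_ord R b}"

end

theory Submission
  imports Defs "HOL-Combinatorics.Orbits"
begin

text \<open>Multiplication by \<open>\<beta>\<close> acts on flags, and the orbit of \<open>F\<close> has \<open>d\<close> elements, where
  \<open>d\<close> is the least \<open>j > 0\<close> with \<open>F\<beta>\<^sup>j = F\<close>; moreover \<open>F\<beta>\<^sup>j = F\<close> exactly when \<open>d\<close> divides \<open>j\<close>.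
  Since \<open>L\<^sup>*\<close> lies in the cyclic group generated by \<open>\<beta>\<close>, it is its subgroup of order
  \<open>e = q\<^sup>m - 1\<close>, generated by \<open>\<beta>\<^sup>c\<close> with \<open>c = |\<beta>|/e\<close>. Multiplication by \<open>\<beta>\<^sup>d\<close> permutes the \<open>e\<close>
  nonzero vectors of the subspace \<open>F\<^sub>i\<close> of dimension \<open>m\<close>; comparing their product with the product
  of their images gives \<open>(\<beta>\<^sup>d)\<^sup>e = 1\<close>, so \<open>c e\<close> divides \<open>d e\<close> and \<open>c\<close> divides \<open>d\<close>. Hence \<open>d = c\<close> iff
  \<open>\<beta>\<^sup>c\<close>, equivalently all of \<open>L\<^sup>*\<close>, maps every \<open>F\<^sub>j\<close> onto itself, i.e. iff every \<open>F\<^sub>j\<close> is an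
  \<open>L\<close>-subspace. In that case the nonzero \<open>L\<close>-space \<open>F\<^sub>1 \<subseteq> F\<^sub>i\<close> has exactly \<open>q\<^sup>m\<close> elements.\<close>

lemma funpow_eq_self_iff_funpow_dist1_dvd:
  assumes "(f ^^ n) x = x" "0 < n"
  shows "(f ^^ k) x = x \<longleftrightarrow> funpow_dist1 f x x dvd k"
proof -
  have "x \<in> Orbits.orbit f x" using assms by (auto simp: orbit_altdef intro!: exI[of _ n])
  then have period: "(f ^^ funpow_dist1 f x x) x = x" by (rule funpow_dist1_prop)
  have "(f ^^ k) x = (f ^^ (k mod funpow_dist1 f x x)) x"
    using funpow_mod_eq[OF period] by simp
  moreover have "(f ^^ (k mod funpow_dist1 f x x)) x \<noteq> x" if "\<not> funpow_dist1 f x x dvd k"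
    using that by (intro funpow_dist1_least) (auto simp: dvd_eq_mod_eq_0)
  ultimately show ?thesis by (auto simp: dvd_eq_mod_eq_0)
qed

lemma card_funpow_orbit:
  assumes "(f ^^ n) x = x" "0 < n"
  shows "card {(f ^^ k) x | k. k < n} = funpow_dist1 f x x"
proof -
  have x_orbit: "x \<in> Orbits.orbit f x" using assms by (auto simp: orbit_altdef intro!: exI[of _ n])
  have "{(f ^^ k) x | k. k < n} = Orbits.orbit f x"
    using orbit_altdef_bounded[OF assms] by simp
  also have "\<dots> = (\<lambda>k. (f ^^ k) x) ` {0..<funpow_dist1 f x x}"
    using x_orbit by (rule orbit_conv_funpow_dist1)
  finally show ?thesis
    using card_image[OF inj_on_funpow_dist1[OF x_orbit]] by simp
qed

lemma div_gcd_dvd_if_dvd_mult: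
  fixes N k e :: nat
  assumes "N dvd k * e" "0 < e"
  shows "N div gcd N e dvd k"
proof -
  have g: "gcd N e \<noteq> 0" using assms(2) by simp
  have "N div gcd N e * gcd N e dvd k * (e div gcd N e) * gcd N e"
    using assms(1) by (metis dvd_div_mult_self gcd_dvd1 gcd_dvd2 mult.assoc)
  then have "N div gcd N e dvd k * (e div gcd N e)"
    by (simp only: dvd_times_right_cancel_iff[OF g])
  moreover have "coprime (N div gcd N e) (e div gcd N e)"
    using assms(2) by (intro div_gcd_coprime) simp
  ultimately show ?thesis by (simp add: coprime_dvd_mult_left_iff)
qed

lemma (in ring) pow_eq_one_iff_elem_ord_dvd:
  assumes "\<beta> \<in> Units R"
  shows "\<beta> [^] k = \<one> \<longleftrightarrow> elem_ord R \<beta> dvd k"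
  using group.pow_eq_id[OF units_group, of \<beta> k] assms
  by (simp add: elem_ord_def units_of_carrier units_of_pow units_of_one)

lemma (in ring) elem_ord_pos:
  assumes "finite (Units R)" "\<beta> \<in> Units R"
  shows "0 < elem_ord R \<beta>"
  using group.ord_ge_1[OF units_group, of \<beta>] assms unfolding elem_ord_def units_of_carrier by simp

lemma (in ring) roots_of_unity_among_powers:
  assumes \<beta>: "\<beta> \<in> Units R"
    and S: "S \<subseteq> range (\<lambda>k::nat. \<beta> [^] k)" "card S = e" "0 < e" "\<forall>x \<in> S. x [^] e = \<one>"
  shows "e dvd elem_ord R \<beta> \<and> S = range (\<lambda>i::nat. \<beta> [^] (elem_ord R \<beta> div e * i))"
proof -
  define N where "N = elem_ord R \<beta>"
  define g where "g = gcd N e"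
  define c where "c = N div g"
  have \<beta>_carrier: "\<beta> \<in> carrier R" using \<beta> by blast
  have pow_mod: "\<beta> [^] (c * t) = \<beta> [^] (c * (t mod g))" for t
  proof -
    have "c * g = N" unfolding c_def g_def by simp
    then have "c * t = N * (t div g) + c * (t mod g)"
      by (metis add_mult_distrib2 div_mult_mod_eq mult.assoc mult.commute)
    moreover have "\<beta> [^] N = \<one>" using pow_eq_one_iff_elem_ord_dvd[OF \<beta>] N_def by simp
    ultimately show ?thesis
      using \<beta>_carrier by (simp add: nat_pow_mult[symmetric] nat_pow_pow[symmetric])
  qed
  have S_sub: "S \<subseteq> (\<lambda>i. \<beta> [^] (c * i)) ` {..<g}"
  proof
    fix x assume x: "x \<in> S"
    then obtain k :: nat where k: "x = \<beta> [^] k" using S(1) by auto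
    then have "(\<beta> [^] k) [^] e = \<one>" using S(4) x by simp
    then have "\<beta> [^] (k * e) = \<one>" using \<beta>_carrier by (simp add: nat_pow_pow)
    then have "N dvd k * e" using pow_eq_one_iff_elem_ord_dvd[OF \<beta>] N_def by simp
    then have "c dvd k" using div_gcd_dvd_if_dvd_mult[OF _ S(3)] unfolding c_def g_def by blast
    then obtain t where "k = c * t" by blast
    then show "x \<in> (\<lambda>i. \<beta> [^] (c * i)) ` {..<g}"
      using k(1) pow_mod[of t] S(3) g_def by auto
  qed
  have "e \<le> g"
    using card_mono[OF _ S_sub] card_image_le[of "{..<g}" "\<lambda>i. \<beta> [^] (c * i)"] S(2) by simp
  then have g_eq: "g = e" using S(3) unfolding g_def by (simp add: antisym gcd_le2_nat)
  have "range (\<lambda>i. \<beta> [^] (c * i)) = (\<lambda>i. \<beta> [^] (c * i)) ` {..<g}"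
  proof (intro subset_antisym subsetI)
    fix x assume "x \<in> range (\<lambda>i. \<beta> [^] (c * i))"
    then obtain t where "x = \<beta> [^] (c * t)" by auto
    then have "x = \<beta> [^] (c * (t mod g))" using pow_mod[of t] by simp
    then show "x \<in> (\<lambda>i. \<beta> [^] (c * i)) ` {..<g}" using S(3) g_eq by simp
  qed auto
  moreover have "S = (\<lambda>i. \<beta> [^] (c * i)) ` {..<g}"
    using card_image_le[of "{..<g}" "\<lambda>i. \<beta> [^] (c * i)"] S(2) g_eq
    by (intro card_seteq[OF _ S_sub]) auto
  moreover have "e dvd N" using g_eq unfolding g_def by (metis gcd_dvd1)
  ultimately show ?thesis using g_eq unfolding c_def N_def by simp
qed

lemma (in ring) one_less_card_subfield:
  assumes "subfield K R" "finite K"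
  shows "1 < card K"
proof -
  have "{\<zero>, \<one>} \<subseteq> K" using subringE(2,3)[OF subfieldE(1)[OF assms(1)]] by simp
  then have "card {\<zero>, \<one>} \<le> card K" using assms(2) by (rule card_mono[rotated])
  then show ?thesis using subfieldE(6)[OF assms(1)] by simp
qed

lemma (in ring) card_dimension:
  assumes K: "subfield K R" and "finite K" and "dimension n K E"
  shows "card E = card K ^ n"
proof -
  obtain Us where Us: "set Us \<subseteq> carrier R" "independent K Us" "length Us = n" "Span K Us = E"
    using exists_base[OF K assms(3)] by blast
  let ?Ks = "{Ks. set Ks \<subseteq> K \<and> length Ks = n}"
  have E: "E = (\<lambda>Ks. combine Ks Us) ` ?Ks"
    using Span_eq_combine_set_length_version[OF K Us(1)] Us(3,4) by auto
  have "inj_on (\<lambda>Ks. combine Ks Us) ?Ks"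
  proof (rule inj_onI)
    fix Ks Ks' assume Ks: "Ks \<in> ?Ks" "Ks' \<in> ?Ks" and eq: "combine Ks Us = combine Ks' Us"
    have "combine Ks Us \<in> Span K Us" using E Ks(1) Us(4) by blast
    then show "Ks = Ks'"
      using unique_decomposition[OF K Us(2)] Ks eq Us(3) by (metis (mono_tags, lifting) mem_Collect_eq)
  qed
  then have "card E = card ?Ks" unfolding E by (rule card_image)
  then show ?thesis using card_lists_length_eq[OF assms(2)] by simp
qed

lemma (in domain) mult_stable_if_mult_closed:
  assumes "finite V" "V \<subseteq> carrier R" "\<gamma> \<in> carrier R - {\<zero>}" "(\<lambda>u. u \<otimes> \<gamma>) ` V \<subseteq> V"
  shows "(\<lambda>u. u \<otimes> \<gamma>) ` V = V"
proof (rule endo_inj_surj[OF assms(1,4)])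
  show "inj_on (\<lambda>u. u \<otimes> \<gamma>) V"
    using assms(2,3) by (intro inj_onI) (simp add: m_rcancel subset_iff)
qed

lemma (in domain) card_le_card_subalgebra:
  assumes "subalgebra L V R" "L \<subseteq> carrier R" "finite V" "v \<in> V" "v \<noteq> \<zero>"
  shows "card L \<le> card V"
proof (rule card_inj_on_le[OF _ _ assms(3)])
  have v: "v \<in> carrier R" using subalgebra_in_carrier[OF assms(1)] assms(4) by blast
  show "inj_on (\<lambda>l. l \<otimes> v) L"
    using assms(2,5) v by (intro inj_onI) (simp add: m_rcancel subset_iff)
  show "(\<lambda>l. l \<otimes> v) ` L \<subseteq> V"
    using subalgebra.smult_closed[OF assms(1) _ assms(4)] by blast
qed

lemma (in comm_group) pow_card_eq_one_if_mult_stable: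
  assumes "finite V" "V \<subseteq> carrier G" "\<gamma> \<in> carrier G" "(\<lambda>u. u \<otimes> \<gamma>) ` V = V"
  shows "\<gamma> [^] card V = \<one>"
proof -
  have "inj_on (\<lambda>u. u \<otimes> \<gamma>) V"
    using assms(2,3) by (intro inj_onI) (simp add: subset_iff)
  have "finprod G (\<lambda>u. u) V = finprod G (\<lambda>u. u) ((\<lambda>u. u \<otimes> \<gamma>) ` V)"
    using assms(4) by simp
  also have "\<dots> = finprod G (\<lambda>u. u \<otimes> \<gamma>) V"
    using assms(2,3) \<open>inj_on _ V\<close> by (intro finprod_reindex) auto
  also have "\<dots> = finprod G (\<lambda>u. u) V \<otimes> \<gamma> [^] card V"
    using assms(2,3) by (subst finprod_multf) (auto simp: finprod_const)
  finally show ?thesis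
    using assms(2,3) by (simp add: subset_iff)
qed

lemma (in field) nonzero_pow_card_eq_one_if_mult_stable:
  assumes "finite V" "V \<subseteq> carrier R - {\<zero>}" "\<gamma> \<in> carrier R - {\<zero>}" "(\<lambda>u. u \<otimes> \<gamma>) ` V = V"
  shows "\<gamma> [^] card V = \<one>"
proof -
  have units: "carrier (units_of R) = carrier R - {\<zero>}"
    by (simp add: units_of_carrier field_Units)
  have "\<gamma> [^]\<^bsub>units_of R\<^esub> card V = \<one>\<^bsub>units_of R\<^esub>"
    using assms
    by (intro comm_group.pow_card_eq_one_if_mult_stable[OF units_comm_group])
       (simp_all add: units units_of_mult)
  then show ?thesis using assms(3) by (simp add: field_Units units_of_pow units_of_one)
qed

lemma (in field) subalgebra_iff_mult_stable:
  assumes L: "subfield L R" and U: "finite U" "subgroup U (add_monoid R)"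
  shows "subalgebra L U R \<longleftrightarrow> (\<forall>\<gamma> \<in> L - {\<zero>}. (\<lambda>u. u \<otimes> \<gamma>) ` U = U)"
proof
  have U_carrier: "U \<subseteq> carrier R" using subgroup.subset[OF U(2)] by simp
  have L_carrier: "L \<subseteq> carrier R" using subfieldE(3)[OF L] .
  show "\<forall>\<gamma> \<in> L - {\<zero>}. (\<lambda>u. u \<otimes> \<gamma>) ` U = U" if "subalgebra L U R"
  proof
    fix \<gamma> assume \<gamma>: "\<gamma> \<in> L - {\<zero>}"
    have "(\<lambda>u. u \<otimes> \<gamma>) ` U \<subseteq> U"
    proof (rule image_subsetI)
      fix u assume u: "u \<in> U"
      then have "\<gamma> \<otimes> u \<in> U" using subalgebra.smult_closed[OF that] \<gamma> by blast
      then show "u \<otimes> \<gamma> \<in> U" using u \<gamma> U_carrier L_carrier by (simp add: m_comm subset_iff)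
    qed
    then show "(\<lambda>u. u \<otimes> \<gamma>) ` U = U"
      using mult_stable_if_mult_closed U(1) U_carrier \<gamma> L_carrier by blast
  qed
  show "subalgebra L U R" if stable: "\<forall>\<gamma> \<in> L - {\<zero>}. (\<lambda>u. u \<otimes> \<gamma>) ` U = U"
  proof (rule subalgebra.intro[OF U(2)], unfold_locales)
    fix k v assume k: "k \<in> L" and v: "v \<in> U"
    show "k \<otimes> v \<in> U"
    proof (cases "k = \<zero>")
      case True
      then show ?thesis using v U_carrier subgroup.one_closed[OF U(2)] by auto
    next
      case False
      then have "v \<otimes> k \<in> U" using stable k v by blast
      then show ?thesis using k v U_carrier L_carrier by (simp add: m_comm subset_iff)
    qed
  qed
qed

lemma (in field) subfield_units_eq_powers:
  assumes "finite (carrier R)" "\<beta> \<in> carrier R - {\<zero>}" "subfield L R"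
    and "L - {\<zero>} \<subseteq> range (\<lambda>k::nat. \<beta> [^] k)"
  shows "card L - 1 dvd elem_ord R \<beta>
    \<and> L - {\<zero>} = range (\<lambda>i::nat. \<beta> [^] (elem_ord R \<beta> div (card L - 1) * i))"
proof -
  have L_carrier: "L \<subseteq> carrier R" using subfieldE(3)[OF assms(3)] .
  then have L_finite: "finite L" using assms(1) finite_subset by blast
  have card_L: "card (L - {\<zero>}) = card L - 1"
    using subringE(2)[OF subfieldE(1)[OF assms(3)]] L_finite by simp
  have "x [^] (card L - 1) = \<one>" if x: "x \<in> L - {\<zero>}" for x
  proof -
    have "(\<lambda>u. u \<otimes> x) ` (L - {\<zero>}) \<subseteq> L - {\<zero>}"
    proof (rule image_subsetI)
      fix u assume u: "u \<in> L - {\<zero>}"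
      then have "u \<in> carrier R" "x \<in> carrier R" using x L_carrier by auto
      then show "u \<otimes> x \<in> L - {\<zero>}"
        using subringE(6)[OF subfieldE(1)[OF assms(3)]] u x integral by blast
    qed
    then have "(\<lambda>u. u \<otimes> x) ` (L - {\<zero>}) = L - {\<zero>}"
      using x L_carrier L_finite by (intro mult_stable_if_mult_closed) auto
    then have "x [^] card (L - {\<zero>}) = \<one>"
      using x L_carrier L_finite by (intro nonzero_pow_card_eq_one_if_mult_stable) auto
    then show ?thesis using card_L by simp
  qed
  then show ?thesis
    using roots_of_unity_among_powers[of \<beta> "L - {\<zero>}" "card L - 1"] assms(2,4) card_L
      one_less_card_subfield[OF assms(3) L_finite] field_Units by simp
qed

lemma is_flag_nth_mono:
  assumes "is_flag R K F ts" "i \<le> j" "j < length F"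
  shows "F ! i \<subseteq> F ! j"
  using assms(2,3)
proof (induction j rule: dec_induct)
  case (step n)
  have "F ! n \<subset> F ! Suc n" using assms(1) step.prems unfolding is_flag_def by blast
  then show ?case using step by auto
qed simp

lemma (in ring) is_flag_subgroup:
  assumes "is_flag R K F ts" "U \<in> set F"
  shows "subgroup U (add_monoid R)"
proof -
  obtain i where "i < length F" "U = F ! i" using assms(2) by (metis in_set_conv_nth)
  then show ?thesis using assms(1) subalgebra.axioms(1) unfolding is_flag_def by blast
qed

lemma (in ring) is_flag_subset_carrier: "is_flag R K F ts \<Longrightarrow> U \<in> set F \<Longrightarrow> U \<subseteq> carrier R"
  using subgroup.subset[OF is_flag_subgroup] by simp

lemma (in ring) card_is_flag_nth:
  assumes "is_flag R K F ts" "subfield K R" "finite K" "i < length F"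
  shows "card (F ! i) = card K ^ (ts ! i)"
proof (rule card_dimension[OF assms(2,3)])
  show "dimension (ts ! i) K (F ! i)" using assms(1,4) unfolding is_flag_def by blast
qed

lemma flag_mult_eq_self_iff: "flag_mult R F \<gamma> = F \<longleftrightarrow> (\<forall>U \<in> set F. (\<lambda>u. u \<otimes>\<^bsub>R\<^esub> \<gamma>) ` U = U)"
  unfolding flag_mult_def using map_eq_conv[of _ F id] by simp

lemma (in ring) funpow_flag_mult:
  assumes "\<forall>U \<in> set F. U \<subseteq> carrier R" "\<beta> \<in> carrier R"
  shows "((\<lambda>G. flag_mult R G \<beta>) ^^ j) F = flag_mult R F (\<beta> [^] j)"
proof (induction j)
  case 0
  have "(\<lambda>u. u \<otimes> \<one>) ` U = U" if "U \<subseteq> carrier R" for U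
    using that image_cong[of U U "\<lambda>u. u \<otimes> \<one>" "\<lambda>u. u"] by (simp add: subset_iff)
  then show ?case using assms(1) flag_mult_eq_self_iff[of R F \<one>] by simp
next
  case (Suc j)
  have "(\<lambda>u. u \<otimes> \<beta>) ` (\<lambda>u. u \<otimes> \<beta> [^] j) ` U = (\<lambda>u. u \<otimes> \<beta> [^] Suc j) ` U"
    if "U \<subseteq> carrier R" for U
    using that assms(2) by (auto simp: image_image m_assoc subset_iff intro!: image_cong)
  then show ?case using Suc assms(1) by (simp add: flag_mult_def)
qed

lemma (in ring) funpow_flag_mult_elem_ord:
  assumes "\<forall>U \<in> set F. U \<subseteq> carrier R" "\<beta> \<in> Units R"
  shows "((\<lambda>G. flag_mult R G \<beta>) ^^ elem_ord R \<beta>) F = F"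
proof -
  have "\<beta> [^] elem_ord R \<beta> = \<one>" using pow_eq_one_iff_elem_ord_dvd[OF assms(2)] by simp
  then show ?thesis
    using funpow_flag_mult[OF assms(1), of \<beta> "elem_ord R \<beta>"] funpow_flag_mult[OF assms(1), of \<beta> 0]
      assms(2) by auto
qed

definition flag_period :: "('a, 'b) ring_scheme \<Rightarrow> 'a \<Rightarrow> 'a set list \<Rightarrow> nat" where
  "flag_period R \<beta> F = funpow_dist1 (\<lambda>G. flag_mult R G \<beta>) F F"

lemma (in ring) flag_mult_pow_eq_self_iff:
  assumes "\<forall>U \<in> set F. U \<subseteq> carrier R" "finite (Units R)" "\<beta> \<in> Units R"
  shows "flag_mult R F (\<beta> [^] j) = F \<longleftrightarrow> flag_period R \<beta> F dvd j"
  using funpow_eq_self_iff_funpow_dist1_dvd[OF funpow_flag_mult_elem_ord[OF assms(1,3)]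
      elem_ord_pos[OF assms(2,3)]] funpow_flag_mult[OF assms(1)] assms(3)
  unfolding flag_period_def by auto

lemma (in ring) card_flag_orbit:
  assumes "\<forall>U \<in> set F. U \<subseteq> carrier R" "finite (Units R)" "\<beta> \<in> Units R"
  shows "card (flag_orbit R \<beta> F) = flag_period R \<beta> F"
proof -
  have "flag_orbit R \<beta> F = {((\<lambda>G. flag_mult R G \<beta>) ^^ j) F | j. j < elem_ord R \<beta>}"
    unfolding flag_orbit_def by (simp only: funpow_flag_mult[OF assms(1) Units_closed[OF assms(3)]])
  then show ?thesis
    using card_funpow_orbit[OF funpow_flag_mult_elem_ord[OF assms(1,3)] elem_ord_pos[OF assms(2,3)]]
    unfolding flag_period_def by simp
qed

lemma (in field) elem_ord_dvd_flag_period_mult: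
  assumes "finite (carrier R)" "\<beta> \<in> carrier R - {\<zero>}" "\<forall>U \<in> set F. U \<subseteq> carrier R"
    and "V \<in> set F" "\<zero> \<in> V"
  shows "elem_ord R \<beta> dvd flag_period R \<beta> F * (card V - 1)"
proof -
  define d where "d = flag_period R \<beta> F"
  have units: "finite (Units R)" "\<beta> \<in> Units R" using assms(1,2) field_Units by auto
  have V_carrier: "V \<subseteq> carrier R" using assms(3,4) by blast
  then have V_finite: "finite V" using assms(1) by (rule finite_subset)
  have \<gamma>: "\<beta> [^] d \<in> carrier R - {\<zero>}"
    using Units_pow_closed[OF units(2), of d] unfolding field_Units .
  have "flag_mult R F (\<beta> [^] d) = F"
    using flag_mult_pow_eq_self_iff[OF assms(3) units] d_def by simp
  then have "(\<lambda>u. u \<otimes> \<beta> [^] d) ` V = V" using assms(4) unfolding flag_mult_eq_self_iff by blast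
  then have "(\<lambda>u. u \<otimes> \<beta> [^] d) ` (V - {\<zero>}) \<subseteq> V - {\<zero>}"
    using V_carrier \<gamma> by (auto dest: integral)
  then have "(\<lambda>u. u \<otimes> \<beta> [^] d) ` (V - {\<zero>}) = V - {\<zero>}"
    using V_carrier V_finite \<gamma> by (intro mult_stable_if_mult_closed) auto
  then have "(\<beta> [^] d) [^] card (V - {\<zero>}) = \<one>"
    using V_carrier V_finite \<gamma> by (intro nonzero_pow_card_eq_one_if_mult_stable) auto
  then show ?thesis
    using pow_eq_one_iff_elem_ord_dvd[OF units(2)] assms(2,5) V_finite
    by (simp add: nat_pow_pow d_def)
qed

lemma (in field) flag_period_eq_iff_subalgebra:
  assumes "finite (carrier R)" "\<beta> \<in> carrier R - {\<zero>}"
    and F: "\<forall>U \<in> set F. subgroup U (add_monoid R)"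
    and L: "subfield L R" "L - {\<zero>} = range (\<lambda>i::nat. \<beta> [^] (c * i))"
    and c_dvd: "c dvd flag_period R \<beta> F"
  shows "flag_period R \<beta> F = c \<longleftrightarrow> (\<forall>U \<in> set F. subalgebra L U R)"
proof -
  have units: "finite (Units R)" "\<beta> \<in> Units R" using assms(1,2) field_Units by auto
  have F_carrier: "\<forall>U \<in> set F. U \<subseteq> carrier R" using F subgroup.subset by force
  then have F_finite: "\<forall>U \<in> set F. finite U" using assms(1) finite_subset by blast
  have "(\<forall>U \<in> set F. subalgebra L U R)
      \<longleftrightarrow> (\<forall>U \<in> set F. \<forall>\<gamma> \<in> L - {\<zero>}. (\<lambda>u. u \<otimes> \<gamma>) ` U = U)"
  proof (intro ball_cong refl)
    fix U assume "U \<in> set F"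
    then show "subalgebra L U R \<longleftrightarrow> (\<forall>\<gamma> \<in> L - {\<zero>}. (\<lambda>u. u \<otimes> \<gamma>) ` U = U)"
      using F F_finite by (intro subalgebra_iff_mult_stable[OF L(1)]) auto
  qed
  also have "\<dots> \<longleftrightarrow> (\<forall>\<gamma> \<in> L - {\<zero>}. flag_mult R F \<gamma> = F)"
    unfolding flag_mult_eq_self_iff by blast
  also have "\<dots> \<longleftrightarrow> (\<forall>i. flag_period R \<beta> F dvd c * i)"
    using L(2) flag_mult_pow_eq_self_iff[OF F_carrier units] by auto
  also have "\<dots> \<longleftrightarrow> flag_period R \<beta> F dvd c"
    by (auto intro: dvd_mult2 dest: spec[of _ 1])
  also have "\<dots> \<longleftrightarrow> flag_period R \<beta> F = c"
    using c_dvd dvd_antisym by auto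
  finally show ?thesis by simp
qed

lemma (in field) is_flag_type_hd_eq_if_subalgebra:
  assumes "finite (carrier R)" "subfield K R" "is_flag R K F ts" "i < length ts"
    and "subfield L R" "card L = card K ^ (ts ! i)" "subalgebra L (F ! 0) R"
  shows "ts ! 0 = ts ! i"
proof -
  have i: "i < length F" using assms(3,4) unfolding is_flag_def by simp
  then have F_nonempty: "F \<noteq> []" by auto
  then have "{\<zero>} \<subset> F ! 0" using assms(3) unfolding is_flag_def by (simp add: hd_conv_nth)
  then obtain v where v: "v \<in> F ! 0" "v \<noteq> \<zero>" by blast
  have K_finite: "finite K" using subfieldE(3)[OF assms(2)] assms(1) finite_subset by blast
  have F_finite: "finite (F ! j)" if "j < length F" for j
    using is_flag_subset_carrier[OF assms(3) nth_mem[OF that]] assms(1) by (rule finite_subset)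
  have "card L \<le> card (F ! 0)"
    using card_le_card_subalgebra[OF assms(7) subfieldE(3)[OF assms(5)] F_finite v] F_nonempty by simp
  moreover have "card (F ! 0) = card K ^ (ts ! 0)"
    using card_is_flag_nth[OF assms(3,2) K_finite] F_nonempty by simp
  moreover have "card (F ! 0) \<le> card (F ! i)"
    using card_mono[OF F_finite[OF i] is_flag_nth_mono[OF assms(3) _ i]] by simp
  ultimately have "card K ^ (ts ! i) \<le> card K ^ (ts ! 0)" "card K ^ (ts ! 0) \<le> card K ^ (ts ! i)"
    using card_is_flag_nth[OF assms(3,2) K_finite i] assms(6) by simp_all
  then show ?thesis
    using one_less_card_subfield[OF assms(2) K_finite] by (simp add: le_antisym)
qed

theorem proposition3p10:
  fixes R :: "('a, 'c) ring_scheme" and K L :: "'a set"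
    and q n m :: nat and F :: "'a set list" and ts :: "nat list" and \<beta> :: 'a
  assumes field_R: "field R"
    and fin: "finite (carrier R)"
    and q_pp: "\<exists>p k. Factorial_Ring.prime (p::nat) \<and> k > 0 \<and> q = p ^ k"
    and card_R: "card (carrier R) = q ^ n"
    and K_sub: "subfield K R" and card_K: "card K = q"
    and flag: "is_flag R K F ts"
    and m_dvd: "m dvd n"
    and m_type: "\<exists>i < length ts. ts ! i = m"
    and L_sub: "subfield L R" and card_L: "card L = q ^ m"
    and beta: "\<beta> \<in> carrier R" "\<beta> \<noteq> \<zero>\<^bsub>R\<^esub>"
    and gen: "L - {\<zero>\<^bsub>R\<^esub>} \<subseteq> {\<beta> [^]\<^bsub>R\<^esub> (k::nat) | k. True}"
  shows "elem_ord R \<beta> div (q ^ m - 1) dvd card (flag_orbit R \<beta> F)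
         \<and> (card (flag_orbit R \<beta> F) = elem_ord R \<beta> div (q ^ m - 1)
              \<longleftrightarrow> (\<forall>j < length F. subalgebra L (F ! j) R))
         \<and> (card (flag_orbit R \<beta> F) = elem_ord R \<beta> div (q ^ m - 1) \<longrightarrow> ts ! 0 = m)"
proof -
  interpret field R by (rule field_R)
  have \<beta>: "\<beta> \<in> carrier R - {\<zero>\<^bsub>R\<^esub>}" using beta by simp
  have units: "finite (Units R)" "\<beta> \<in> Units R" using fin \<beta> field_Units by auto
  have F_subgroup: "\<forall>U \<in> set F. subgroup U (add_monoid R)" using is_flag_subgroup[OF flag] by blast
  have F_carrier: "\<forall>U \<in> set F. U \<subseteq> carrier R" using is_flag_subset_carrier[OF flag] by blast
  have K_finite: "finite K" using subfieldE(3)[OF K_sub] fin finite_subset by blast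
  obtain i where i: "i < length ts" "ts ! i = m" using m_type by blast
  then have i_F: "i < length F" using flag unfolding is_flag_def by simp
  define e where "e = q ^ m - 1"
  define c where "c = elem_ord R \<beta> div e"
  define d where "d = flag_period R \<beta> F"
  have e_pos: "0 < e"
    using one_less_card_subfield[OF L_sub] fin subfieldE(3)[OF L_sub] card_L finite_subset
    unfolding e_def by fastforce
  have L_units: "e dvd elem_ord R \<beta>" "L - {\<zero>\<^bsub>R\<^esub>} = range (\<lambda>i::nat. \<beta> [^]\<^bsub>R\<^esub> (c * i))"
    using subfield_units_eq_powers[OF fin \<beta> L_sub] gen card_L unfolding e_def c_def
    by (simp_all add: full_SetCompr_eq)
  have "elem_ord R \<beta> dvd d * (card (F ! i) - 1)"
    using elem_ord_dvd_flag_period_mult[OF fin \<beta> F_carrier nth_mem[OF i_F]]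
      subgroup.one_closed[OF bspec[OF F_subgroup nth_mem[OF i_F]]] unfolding d_def by simp
  then have "c * e dvd d * e"
    using card_is_flag_nth[OF flag K_sub K_finite i_F] card_K i(2) L_units(1)
    unfolding c_def e_def by simp
  then have c_dvd: "c dvd d" using e_pos by simp
  have subalgebras: "d = c \<longleftrightarrow> (\<forall>U \<in> set F. subalgebra L U R)"
    using flag_period_eq_iff_subalgebra[OF fin \<beta> F_subgroup L_sub L_units(2)] c_dvd
    unfolding d_def by blast
  have "ts ! 0 = m" if "d = c"
  proof -
    have "F ! 0 \<in> set F" using i_F by (cases F) auto
    then have "subalgebra L (F ! 0) R" using subalgebras that by blast
    then show ?thesis
      using is_flag_type_hd_eq_if_subalgebra[OF fin K_sub flag i(1) L_sub] card_L card_K i(2) by simp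
  qed
  then show ?thesis
    using card_flag_orbit[OF F_carrier units] c_dvd subalgebras
    unfolding d_def c_def e_def by (simp add: all_set_conv_all_nth)
qed

end
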